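(* Let $G$ be a modular noetherian right $\ell$-group with strong order unit $s$ and degree homomorphism $\deg$. Let $d \geq 1$, and let $g \in G^-$ be $d$-homogeneous with right-normal factorization $g = g_k g_{k-1}\cdots g_1$. Then this factorization is also left-normal. That is, the sequence $h_i := g_{k+1-i}$ ($1 \leq i \leq k$) is the left-normal factorization $g = h_1 h_2 \cdots h_k$.
   Context: A right $\ell$-group is a group $G$ (identity $e$) with a right-invariant partial order making $G$ a lattice. It is modular if the lattice is modular. It is noetherian if for each $g$ the set $\{h \geq g\}$ satisfies the descending chain condition and the set $\{h \leq g\}$ satisfies the ascending chain condition. $G^- = \{g \leq e\}$ and $[a,b] = \{x : a\leq x\leq b\}$. A strong order unit is an element $s > e$ such that $x \mapsto sx$ is a lattice automorphism and every $g$ satisfies $g \leq s^k$ for some $k \in \mathbb{Z}$. $\deg : G \to \mathbb{Z}$ is the unique group homomorphism sending $g \in G^-$ to the common length of its factorizations into elements covered by $e$. A right-normal factorization of $g \in G^-$ is a sequence $g_1,\dots,g_k \in [s^{-1},e] \setminus \{e\}$ with $g = g_k\cdots g_1$ such that, for $1 \leq i < k$, there are no $h,h' \in G^-$ with $h\neq e$, $h'h = g_{i+1}$, $hg_i \in [s^{-1},e]$. It exists and is unique. A left-normal factorization of $g$ is a sequence $h_1,\dots,h_k \in [s^{-1},e]\setminus\{e\}$ with $g = h_1\cdots h_k$ such that, for $1 \leq i<k$, there are no $h,h' \in G^-$ with $h \neq e$, $hh' = h_{i+1}$, $h_ih \in [s^{-1},e]$. The element $g$ is $d$-homogeneous if every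 factor $g_i$ of its right-normal factorization satisfies $\deg(g_i) = d$. *)

theory Defs
  imports "HOL-Algebra.Group"
begin

definition lt_rel :: "('a \<Rightarrow> 'a \<Rightarrow> bool) \<Rightarrow> 'a \<Rightarrow> 'a \<Rightarrow> bool" where
  "lt_rel leq x y \<longleftrightarrow> leq x y \<and> x \<noteq> y"

definition is_join :: "('a, 'b) monoid_scheme \<Rightarrow> ('a \<Rightarrow> 'a \<Rightarrow> bool) \<Rightarrow> 'a \<Rightarrow> 'a \<Rightarrow> 'a \<Rightarrow> bool" where
  "is_join G leq x y z \<longleftrightarrow> z \<in> carrier G \<and> leq x z \<and> leq y z \<and>
     (\<forall>w\<in>carrier G. leq x w \<and> leq y w \<longrightarrow> leq z w)"

definition is_meet :: "('a, 'b) monoid_scheme \<Rightarrow> ('a \<Rightarrow> 'a \<Rightarrow> bool) \<Rightarrow> 'a \<Rightarrow> 'a \<Rightarrow> 'a \<Rightarrow> bool" where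
  "is_meet G leq x y z \<longleftrightarrow> z \<in> carrier G \<and> leq z x \<and> leq z y \<and>
     (\<forall>w\<in>carrier G. leq w x \<and> leq w y \<longrightarrow> leq w z)"

definition ljoin :: "('a, 'b) monoid_scheme \<Rightarrow> ('a \<Rightarrow> 'a \<Rightarrow> bool) \<Rightarrow> 'a \<Rightarrow> 'a \<Rightarrow> 'a" where
  "ljoin G leq x y = (THE z. is_join G leq x y z)"

definition lmeet :: "('a, 'b) monoid_scheme \<Rightarrow> ('a \<Rightarrow> 'a \<Rightarrow> bool) \<Rightarrow> 'a \<Rightarrow> 'a \<Rightarrow> 'a" where
  "lmeet G leq x y = (THE z. is_meet G leq x y z)"

definition right_lgroup :: "('a, 'b) monoid_scheme \<Rightarrow> ('a \<Rightarrow> 'a \<Rightarrow> bool) \<Rightarrow> bool" where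
  "right_lgroup G leq \<longleftrightarrow> group G \<and>
     (\<forall>x\<in>carrier G. leq x x) \<and>
     (\<forall>x\<in>carrier G. \<forall>y\<in>carrier G. leq x y \<and> leq y x \<longrightarrow> x = y) \<and>
     (\<forall>x\<in>carrier G. \<forall>y\<in>carrier G. \<forall>z\<in>carrier G. leq x y \<and> leq y z \<longrightarrow> leq x z) \<and>
     (\<forall>x\<in>carrier G. \<forall>y\<in>carrier G. \<forall>z\<in>carrier G. leq x y \<longrightarrow> leq (x \<otimes>\<^bsub>G\<^esub> z) (y \<otimes>\<^bsub>G\<^esub> z)) \<and>
     (\<forall>x\<in>carrier G. \<forall>y\<in>carrier G. (\<exists>z. is_join G leq x y z) \<and> (\<exists>z. is_meet G leq x y z))"

definition modular_lgroup :: "('a, 'b) monoid_scheme \<Rightarrow> ('a \<Rightarrow> 'a \<Rightarrow> bool) \<Rightarrow> bool" where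
  "modular_lgroup G leq \<longleftrightarrow>
     (\<forall>x\<in>carrier G. \<forall>y\<in>carrier G. \<forall>z\<in>carrier G. leq x z \<longrightarrow>
        ljoin G leq x (lmeet G leq y z) = lmeet G leq (ljoin G leq x y) z)"

definition noetherian_lgroup :: "('a, 'b) monoid_scheme \<Rightarrow> ('a \<Rightarrow> 'a \<Rightarrow> bool) \<Rightarrow> bool" where
  "noetherian_lgroup G leq \<longleftrightarrow> (\<forall>g\<in>carrier G.
     \<not> (\<exists>f :: nat \<Rightarrow> 'a. \<forall>n. f n \<in> carrier G \<and> leq g (f n) \<and> lt_rel leq (f (Suc n)) (f n)) \<and>
     \<not> (\<exists>f :: nat \<Rightarrow> 'a. \<forall>n. f n \<in> carrier G \<and> leq (f n) g \<and> lt_rel leq (f n) (f (Suc n))))"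

definition strong_order_unit :: "('a, 'b) monoid_scheme \<Rightarrow> ('a \<Rightarrow> 'a \<Rightarrow> bool) \<Rightarrow> 'a \<Rightarrow> bool" where
  "strong_order_unit G leq s \<longleftrightarrow> s \<in> carrier G \<and> lt_rel leq \<one>\<^bsub>G\<^esub> s \<and>
     bij_betw (\<lambda>x. s \<otimes>\<^bsub>G\<^esub> x) (carrier G) (carrier G) \<and>
     (\<forall>x\<in>carrier G. \<forall>y\<in>carrier G.
        s \<otimes>\<^bsub>G\<^esub> ljoin G leq x y = ljoin G leq (s \<otimes>\<^bsub>G\<^esub> x) (s \<otimes>\<^bsub>G\<^esub> y) \<and>
        s \<otimes>\<^bsub>G\<^esub> lmeet G leq x y = lmeet G leq (s \<otimes>\<^bsub>G\<^esub> x) (s \<otimes>\<^bsub>G\<^esub> y)) \<and>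
     (\<forall>g\<in>carrier G. \<exists>k::int. leq g (s [^]\<^bsub>G\<^esub> k))"

definition neg_cone :: "('a, 'b) monoid_scheme \<Rightarrow> ('a \<Rightarrow> 'a \<Rightarrow> bool) \<Rightarrow> 'a set" where
  "neg_cone G leq = {x \<in> carrier G. leq x \<one>\<^bsub>G\<^esub>}"

definition interval :: "('a, 'b) monoid_scheme \<Rightarrow> ('a \<Rightarrow> 'a \<Rightarrow> bool) \<Rightarrow> 'a \<Rightarrow> 'a \<Rightarrow> 'a set" where
  "interval G leq a b = {x \<in> carrier G. leq a x \<and> leq x b}"

definition covered_by :: "('a, 'b) monoid_scheme \<Rightarrow> ('a \<Rightarrow> 'a \<Rightarrow> bool) \<Rightarrow> 'a \<Rightarrow> 'a \<Rightarrow> bool" where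
  "covered_by G leq x y \<longleftrightarrow> x \<in> carrier G \<and> y \<in> carrier G \<and> lt_rel leq x y \<and>
     \<not> (\<exists>c\<in>carrier G. lt_rel leq x c \<and> lt_rel leq c y)"

definition lprod :: "('a, 'b) monoid_scheme \<Rightarrow> 'a list \<Rightarrow> 'a" where
  "lprod G xs = foldr (\<lambda>x acc. x \<otimes>\<^bsub>G\<^esub> acc) xs \<one>\<^bsub>G\<^esub>"

definition is_degree :: "('a, 'b) monoid_scheme \<Rightarrow> ('a \<Rightarrow> 'a \<Rightarrow> bool) \<Rightarrow> ('a \<Rightarrow> int) \<Rightarrow> bool" where
  "is_degree G leq deg \<longleftrightarrow>
     (\<forall>x\<in>carrier G. \<forall>y\<in>carrier G. deg (x \<otimes>\<^bsub>G\<^esub> y) = deg x + deg y) \<and>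
     (\<forall>g\<in>neg_cone G leq. \<forall>as. (\<forall>a\<in>set as. covered_by G leq a \<one>\<^bsub>G\<^esub>) \<and> lprod G as = g
        \<longrightarrow> deg g = int (length as))"

text \<open>Right-normal factorization: gs = [g_1,...,g_k] with g = g_k ... g_1.\<close>
definition right_normal :: "('a, 'b) monoid_scheme \<Rightarrow> ('a \<Rightarrow> 'a \<Rightarrow> bool) \<Rightarrow> 'a \<Rightarrow> 'a \<Rightarrow> 'a list \<Rightarrow> bool" where
  "right_normal G leq s g gs \<longleftrightarrow>
     (\<forall>x\<in>set gs. x \<in> interval G leq (inv\<^bsub>G\<^esub> s) \<one>\<^bsub>G\<^esub> - {\<one>\<^bsub>G\<^esub>}) \<and>
     g = lprod G (rev gs) \<and>
     (\<forall>i. Suc i < length gs \<longrightarrow>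
        \<not> (\<exists>h\<in>neg_cone G leq. \<exists>h'\<in>neg_cone G leq. h \<noteq> \<one>\<^bsub>G\<^esub> \<and>
             h' \<otimes>\<^bsub>G\<^esub> h = gs ! Suc i \<and>
             h \<otimes>\<^bsub>G\<^esub> (gs ! i) \<in> interval G leq (inv\<^bsub>G\<^esub> s) \<one>\<^bsub>G\<^esub>))"

definition left_normal :: "('a, 'b) monoid_scheme \<Rightarrow> ('a \<Rightarrow> 'a \<Rightarrow> bool) \<Rightarrow> 'a \<Rightarrow> 'a \<Rightarrow> 'a list \<Rightarrow> bool" where
  "left_normal G leq s g hs \<longleftrightarrow>
     (\<forall>x\<in>set hs. x \<in> interval G leq (inv\<^bsub>G\<^esub> s) \<one>\<^bsub>G\<^esub> - {\<one>\<^bsub>G\<^esub>}) \<and>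
     g = lprod G hs \<and>
     (\<forall>i. Suc i < length hs \<longrightarrow>
        \<not> (\<exists>h\<in>neg_cone G leq. \<exists>h'\<in>neg_cone G leq. h \<noteq> \<one>\<^bsub>G\<^esub> \<and>
             h \<otimes>\<^bsub>G\<^esub> h' = hs ! Suc i \<and>
             (hs ! i) \<otimes>\<^bsub>G\<^esub> h \<in> interval G leq (inv\<^bsub>G\<^esub> s) \<one>\<^bsub>G\<^esub>))"

definition homogeneous :: "('a, 'b) monoid_scheme \<Rightarrow> ('a \<Rightarrow> 'a \<Rightarrow> bool) \<Rightarrow> 'a \<Rightarrow> ('a \<Rightarrow> int) \<Rightarrow> int \<Rightarrow> 'a \<Rightarrow> bool" where
  "homogeneous G leq s deg d g \<longleftrightarrow>
     (\<forall>gs. right_normal G leq s g gs \<longrightarrow> (\<forall>x\<in>set gs. deg x = d))"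

end

theory Submission
  imports Defs
begin

(* Let b a be a right-normal pair of consecutive factors of equal degree and put x = s^-1 a^-1,
   so that x a = s^-1. The join J of x and b lies below e; if J were not e, then J would be a
   nontrivial right divisor of b with J a in [s^-1, e], contradicting right-normality. So the join
   of x and b is e. In a modular noetherian lattice the degree is a rank function,
   deg (x join y) + deg (x meet y) = deg x + deg y, whence
   deg (x meet b) = deg s^-1 - deg a + deg b = deg s^-1, and since s^-1 <= x meet b, the meet is s^-1.
   Finally, if a = h h' with s^-1 <= b h, then s^-1 h^-1 lies below both x and b, hence below s^-1,
   which forces h = e: the pair b a is also left-normal. *)

lemma wfp_on_if_no_descending_chain:
  assumes "\<not> (\<exists>f :: nat \<Rightarrow> 'a. \<forall>n. f n \<in> A \<and> R (f (Suc n)) (f n))"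
  shows "wfp_on A R"
proof -
  have "wf {(x, y). R x y \<and> x \<in> A \<and> y \<in> A}"
  proof (unfold wf_iff_no_infinite_down_chain, rule notI, elim exE)
    fix f assume "\<forall>i. (f (Suc i), f i) \<in> {(x, y). R x y \<and> x \<in> A \<and> y \<in> A}"
    then have "\<forall>n. f n \<in> A \<and> R (f (Suc n)) (f n)" by simp
    with assms show False by blast
  qed
  then have "wfp (\<lambda>x y. R x y \<and> x \<in> A \<and> y \<in> A)"
    by (simp add: wfp_def)
  then show ?thesis
    by (rule wfp_on_iff_wfp[THEN iffD2])
qed

lemma successively_iff_nth:
  "successively P xs \<longleftrightarrow> (\<forall>i. Suc i < length xs \<longrightarrow> P (xs ! i) (xs ! Suc i))"
proof (induction P xs rule: successively.induct)
  case (3 P x y xs)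
  have "(\<forall>i. Suc i < length (x # y # xs) \<longrightarrow> P ((x # y # xs) ! i) ((x # y # xs) ! Suc i)) \<longleftrightarrow>
        P x y \<and> (\<forall>i. Suc i < length (y # xs) \<longrightarrow> P ((y # xs) ! i) ((y # xs) ! Suc i))"
    by (metis (no_types, lifting) Suc_less_eq length_Cons nat.exhaust nth_Cons_0 nth_Cons_Suc zero_less_Suc)
  with 3 show ?case by simp
qed simp_all

(* In both definitions b is the left and a the right factor of the product b a. *)

definition right_normal_pair :: "('a, 'b) monoid_scheme \<Rightarrow> ('a \<Rightarrow> 'a \<Rightarrow> bool) \<Rightarrow> 'a \<Rightarrow> 'a \<Rightarrow> 'a \<Rightarrow> bool" where
  "right_normal_pair G leq s b a \<longleftrightarrow>
     \<not> (\<exists>h\<in>neg_cone G leq. \<exists>h'\<in>neg_cone G leq. h \<noteq> \<one>\<^bsub>G\<^esub> \<and>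
          h' \<otimes>\<^bsub>G\<^esub> h = b \<and> h \<otimes>\<^bsub>G\<^esub> a \<in> interval G leq (inv\<^bsub>G\<^esub> s) \<one>\<^bsub>G\<^esub>)"

definition left_normal_pair :: "('a, 'b) monoid_scheme \<Rightarrow> ('a \<Rightarrow> 'a \<Rightarrow> bool) \<Rightarrow> 'a \<Rightarrow> 'a \<Rightarrow> 'a \<Rightarrow> bool" where
  "left_normal_pair G leq s b a \<longleftrightarrow>
     \<not> (\<exists>h\<in>neg_cone G leq. \<exists>h'\<in>neg_cone G leq. h \<noteq> \<one>\<^bsub>G\<^esub> \<and>
          h \<otimes>\<^bsub>G\<^esub> h' = a \<and> b \<otimes>\<^bsub>G\<^esub> h \<in> interval G leq (inv\<^bsub>G\<^esub> s) \<one>\<^bsub>G\<^esub>)"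

lemma right_normal_iff_successively:
  "right_normal G leq s g gs \<longleftrightarrow>
     (\<forall>x\<in>set gs. x \<in> interval G leq (inv\<^bsub>G\<^esub> s) \<one>\<^bsub>G\<^esub> - {\<one>\<^bsub>G\<^esub>}) \<and> g = lprod G (rev gs) \<and>
     successively (\<lambda>a b. right_normal_pair G leq s b a) gs"
  by (simp only: right_normal_def right_normal_pair_def successively_iff_nth)

lemma left_normal_iff_successively:
  "left_normal G leq s g hs \<longleftrightarrow>
     (\<forall>x\<in>set hs. x \<in> interval G leq (inv\<^bsub>G\<^esub> s) \<one>\<^bsub>G\<^esub> - {\<one>\<^bsub>G\<^esub>}) \<and> g = lprod G hs \<and>
     successively (left_normal_pair G leq s) hs"
  by (simp only: left_normal_def left_normal_pair_def successively_iff_nth)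

locale rlgroup =
  fixes G (structure) and leq :: "'a \<Rightarrow> 'a \<Rightarrow> bool" (infix \<open>\<preceq>\<close> 50)
  assumes right_lgroup: "right_lgroup G leq"

sublocale rlgroup \<subseteq> group G
  using right_lgroup unfolding right_lgroup_def by blast

context rlgroup
begin

abbreviation less_l (infix \<open>\<prec>\<close> 50) where "x \<prec> y \<equiv> lt_rel leq x y"
abbreviation join_l (infixl \<open>\<curlyvee>\<close> 65) where "x \<curlyvee> y \<equiv> ljoin G leq x y"
abbreviation meet_l (infixl \<open>\<curlywedge>\<close> 70) where "x \<curlywedge> y \<equiv> lmeet G leq x y"

lemma leq_refl: "x \<in> carrier G \<Longrightarrow> x \<preceq> x"
  using right_lgroup unfolding right_lgroup_def by blast

lemma leq_antisym: "\<lbrakk>x \<in> carrier G; y \<in> carrier G; x \<preceq> y; y \<preceq> x\<rbrakk> \<Longrightarrow> x = y"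
  using right_lgroup unfolding right_lgroup_def by blast

lemma leq_trans:
  "\<lbrakk>x \<in> carrier G; y \<in> carrier G; z \<in> carrier G; x \<preceq> y; y \<preceq> z\<rbrakk> \<Longrightarrow> x \<preceq> z"
  using right_lgroup unfolding right_lgroup_def by blast

lemma mult_right_mono:
  "\<lbrakk>x \<in> carrier G; y \<in> carrier G; z \<in> carrier G; x \<preceq> y\<rbrakk> \<Longrightarrow> x \<otimes> z \<preceq> y \<otimes> z"
  using right_lgroup unfolding right_lgroup_def by blast

lemma mult_right_le_iff:
  assumes "x \<in> carrier G" "y \<in> carrier G" "z \<in> carrier G"
  shows "x \<otimes> z \<preceq> y \<otimes> z \<longleftrightarrow> x \<preceq> y"
  using mult_right_mono[of "x \<otimes> z" "y \<otimes> z" "inv z"] mult_right_mono[of x y z] assms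
  by (auto simp: m_assoc)

lemma mult_right_less:
  "\<lbrakk>x \<in> carrier G; y \<in> carrier G; z \<in> carrier G; x \<prec> y\<rbrakk> \<Longrightarrow> x \<otimes> z \<prec> y \<otimes> z"
  unfolding lt_rel_def using mult_right_le_iff by auto

lemma is_join_unique: "\<lbrakk>is_join G leq x y z; is_join G leq x y z'\<rbrakk> \<Longrightarrow> z = z'"
  unfolding is_join_def using leq_antisym by blast

lemma is_meet_unique: "\<lbrakk>is_meet G leq x y z; is_meet G leq x y z'\<rbrakk> \<Longrightarrow> z = z'"
  unfolding is_meet_def using leq_antisym by blast

lemma join_meet_exist:
  "\<lbrakk>x \<in> carrier G; y \<in> carrier G\<rbrakk> \<Longrightarrow> (\<exists>z. is_join G leq x y z) \<and> (\<exists>z. is_meet G leq x y z)"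
  using right_lgroup by (simp add: right_lgroup_def)

lemma is_join_ljoin:
  assumes "x \<in> carrier G" "y \<in> carrier G"
  shows "is_join G leq x y (x \<curlyvee> y)"
proof -
  obtain z where z: "is_join G leq x y z"
    using join_meet_exist[OF assms] by blast
  then show ?thesis
    unfolding ljoin_def by (rule theI) (erule is_join_unique[OF _ z])
qed

lemma is_meet_lmeet:
  assumes "x \<in> carrier G" "y \<in> carrier G"
  shows "is_meet G leq x y (x \<curlywedge> y)"
proof -
  obtain z where z: "is_meet G leq x y z"
    using join_meet_exist[OF assms] by blast
  then show ?thesis
    unfolding lmeet_def by (rule theI) (erule is_meet_unique[OF _ z])
qed

lemma ljoin_eq: "\<lbrakk>x \<in> carrier G; y \<in> carrier G; is_join G leq x y z\<rbrakk> \<Longrightarrow> x \<curlyvee> y = z"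
  using is_join_ljoin is_join_unique by blast

lemma lmeet_eq: "\<lbrakk>x \<in> carrier G; y \<in> carrier G; is_meet G leq x y z\<rbrakk> \<Longrightarrow> x \<curlywedge> y = z"
  using is_meet_lmeet is_meet_unique by blast

context
  fixes x y assumes x: "x \<in> carrier G" and y: "y \<in> carrier G"
begin

lemma join_closed: "x \<curlyvee> y \<in> carrier G"
  and join_ge1: "x \<preceq> x \<curlyvee> y"
  and join_ge2: "y \<preceq> x \<curlyvee> y"
  and join_least: "\<lbrakk>z \<in> carrier G; x \<preceq> z; y \<preceq> z\<rbrakk> \<Longrightarrow> x \<curlyvee> y \<preceq> z"
  using is_join_ljoin[OF x y] unfolding is_join_def by blast+

lemma meet_closed: "x \<curlywedge> y \<in> carrier G"
  and meet_le1: "x \<curlywedge> y \<preceq> x"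
  and meet_le2: "x \<curlywedge> y \<preceq> y"
  and meet_greatest: "\<lbrakk>z \<in> carrier G; z \<preceq> x; z \<preceq> y\<rbrakk> \<Longrightarrow> z \<preceq> x \<curlywedge> y"
  using is_meet_lmeet[OF x y] unfolding is_meet_def by blast+

lemma join_commute: "x \<curlyvee> y = y \<curlyvee> x"
  using is_join_ljoin[OF y x] by (intro ljoin_eq[OF x y]) (auto simp: is_join_def)

lemma meet_commute: "x \<curlywedge> y = y \<curlywedge> x"
  using is_meet_lmeet[OF y x] by (intro lmeet_eq[OF x y]) (auto simp: is_meet_def)

lemma join_absorb2: "x \<preceq> y \<Longrightarrow> x \<curlyvee> y = y"
  using x y leq_refl by (intro ljoin_eq) (auto simp: is_join_def)

lemma meet_absorb1: "x \<preceq> y \<Longrightarrow> x \<curlywedge> y = x"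
  using x y leq_refl by (intro lmeet_eq) (auto simp: is_meet_def)

end

lemma join_mono:
  assumes u: "u \<in> carrier G" and c: "c \<in> carrier G" and y: "y \<in> carrier G" and "u \<preceq> c"
  shows "u \<curlyvee> y \<preceq> c \<curlyvee> y"
  using join_least[OF u y join_closed[OF c y]] leq_trans[OF u c join_closed[OF c y] \<open>u \<preceq> c\<close>]
    join_ge1[OF c y] join_ge2[OF c y] by blast

lemma leq_iff_join_eq: "\<lbrakk>x \<in> carrier G; y \<in> carrier G\<rbrakk> \<Longrightarrow> x \<preceq> y \<longleftrightarrow> x \<curlyvee> y = y"
  using join_absorb2 join_ge1 by metis

lemma covered_by_mult_right:
  assumes cov: "covered_by G leq u c" and z: "z \<in> carrier G"
  shows "covered_by G leq (u \<otimes> z) (c \<otimes> z)"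
proof -
  have u: "u \<in> carrier G" and c: "c \<in> carrier G" and "u \<prec> c"
    and no_between: "\<not> (\<exists>y\<in>carrier G. u \<prec> y \<and> y \<prec> c)"
    using cov unfolding covered_by_def by auto
  have "\<not> (u \<otimes> z \<prec> y \<and> y \<prec> c \<otimes> z)" if y: "y \<in> carrier G" for y
  proof
    assume "u \<otimes> z \<prec> y \<and> y \<prec> c \<otimes> z"
    then have "u \<prec> y \<otimes> inv z" and "y \<otimes> inv z \<prec> c"
      using mult_right_less[of "u \<otimes> z" y "inv z"] mult_right_less[of y "c \<otimes> z" "inv z"] u c y z
      by (simp_all add: m_assoc)
    with no_between y z show False by blast
  qed
  then show ?thesis
    unfolding covered_by_def using u c z \<open>u \<prec> c\<close> mult_right_less by blast
qed

context
  fixes s assumes unit: "strong_order_unit G leq s"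
begin

lemma unit_closed: "s \<in> carrier G"
  using unit unfolding strong_order_unit_def by blast

lemma unit_mult_le_iff:
  assumes u: "u \<in> carrier G" and v: "v \<in> carrier G"
  shows "s \<otimes> u \<preceq> s \<otimes> v \<longleftrightarrow> u \<preceq> v"
proof -
  have "s \<otimes> (u \<curlyvee> v) = (s \<otimes> u) \<curlyvee> (s \<otimes> v)"
    using unit u v unfolding strong_order_unit_def by blast
  then have "s \<otimes> u \<preceq> s \<otimes> v \<longleftrightarrow> s \<otimes> (u \<curlyvee> v) = s \<otimes> v"
    using leq_iff_join_eq unit_closed u v by simp
  also have "\<dots> \<longleftrightarrow> u \<curlyvee> v = v"
    using unit_closed u v join_closed by simp
  finally show ?thesis
    using leq_iff_join_eq u v by simp
qed

lemma inv_unit_mult_le_iff: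
  assumes u: "u \<in> carrier G" and v: "v \<in> carrier G"
  shows "inv s \<otimes> u \<preceq> inv s \<otimes> v \<longleftrightarrow> u \<preceq> v"
  using unit_mult_le_iff[of "inv s \<otimes> u" "inv s \<otimes> v"] unit_closed u v
  by (simp add: m_assoc[symmetric])

lemma inv_unit_le_mult_inv:
  assumes h: "h \<in> carrier G" "h \<preceq> \<one>"
  shows "inv s \<preceq> inv s \<otimes> inv h"
proof -
  have "inv s \<otimes> h \<preceq> inv s"
    using inv_unit_mult_le_iff[of h \<one>] h unit_closed by simp
  then show ?thesis
    using mult_right_le_iff[of "inv s" "inv s \<otimes> inv h" h] h unit_closed by (simp add: m_assoc)
qed

end

end

locale modular_noetherian_rlgroup = rlgroup +
  fixes deg :: "'a \<Rightarrow> int"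
  assumes modular: "modular_lgroup G leq"
    and noetherian: "noetherian_lgroup G leq"
    and degree: "is_degree G leq deg"
begin

lemma wfp_on_above: "w \<in> carrier G \<Longrightarrow> wfp_on {z \<in> carrier G. w \<preceq> z} (\<prec>)"
  using noetherian unfolding noetherian_lgroup_def
  by (intro wfp_on_if_no_descending_chain) auto

lemma wfp_on_below: "c \<in> carrier G \<Longrightarrow> wfp_on {z \<in> carrier G. z \<preceq> c} (\<lambda>x y. y \<prec> x)"
  using noetherian unfolding noetherian_lgroup_def
  by (intro wfp_on_if_no_descending_chain) auto

lemma exists_covered_between:
  assumes w: "w \<in> carrier G" and c: "c \<in> carrier G" and "w \<prec> c"
  obtains u where "u \<in> carrier G" "w \<preceq> u" "covered_by G leq u c"
proof -
  let ?B = "{z \<in> carrier G. w \<preceq> z \<and> z \<prec> c}"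
  have "?B \<subseteq> {z \<in> carrier G. z \<preceq> c}" and "w \<in> ?B"
    using assms leq_refl by (auto simp: lt_rel_def)
  then obtain u where u: "u \<in> ?B" and maximal: "\<And>z. u \<prec> z \<Longrightarrow> z \<notin> ?B"
    using wfp_on_iff_ex_minimal[THEN iffD1, OF wfp_on_below[OF c], rule_format] by blast
  have "covered_by G leq u c"
    unfolding covered_by_def using u maximal leq_trans[OF w] c by (auto simp: lt_rel_def)
  with u show thesis using that by blast
qed

lemma deg_mult: "\<lbrakk>x \<in> carrier G; y \<in> carrier G\<rbrakk> \<Longrightarrow> deg (x \<otimes> y) = deg x + deg y"
  using degree unfolding is_degree_def by blast

lemma deg_one: "deg \<one> = 0"
  using deg_mult[of \<one> \<one>] by simp

lemma deg_inv: "x \<in> carrier G \<Longrightarrow> deg (inv x) = - deg x"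
  using deg_mult[of x "inv x"] deg_one by simp

lemma deg_covered_by_one: "covered_by G leq t \<one> \<Longrightarrow> deg t = 1"
proof -
  assume cov: "covered_by G leq t \<one>"
  have factorization: "\<And>g as. \<lbrakk>g \<in> neg_cone G leq; \<forall>a\<in>set as. covered_by G leq a \<one>;
      lprod G as = g\<rbrakk> \<Longrightarrow> deg g = int (length as)"
    using degree unfolding is_degree_def by blast
  have "t \<in> neg_cone G leq" "lprod G [t] = t"
    using cov by (auto simp: covered_by_def neg_cone_def lt_rel_def lprod_def)
  then show "deg t = 1"
    using factorization[of t "[t]"] cov by simp
qed

lemma deg_covered:
  assumes cov: "covered_by G leq u c"
  shows "deg u = deg c + 1"
proof -
  have u: "u \<in> carrier G" and c: "c \<in> carrier G"
    using cov unfolding covered_by_def by auto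
  have "covered_by G leq (u \<otimes> inv c) \<one>"
    using covered_by_mult_right[OF cov, of "inv c"] c by simp
  then show ?thesis
    using deg_covered_by_one deg_mult[of u "inv c"] deg_inv[OF c] u c by simp
qed

lemma deg_less_if_less:
  assumes w: "w \<in> carrier G" and c: "c \<in> carrier G" and "w \<prec> c"
  shows "deg c < deg w"
proof -
  have "c \<in> {z \<in> carrier G. w \<preceq> z}"
    using c \<open>w \<prec> c\<close> by (simp add: lt_rel_def)
  then show ?thesis using \<open>w \<prec> c\<close>
  proof (induction c rule: wfp_on_induct[OF wfp_on_above[OF w], consumes 1, case_names less])
    case (less c)
    obtain u where u: "u \<in> carrier G" "w \<preceq> u" "covered_by G leq u c"
      using exists_covered_between[OF w _ less.prems] less.hyps by blast
    have "deg u \<le> deg w"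
    proof (cases "u = w")
      case False
      then show ?thesis
        using less.IH[of u] u by (fastforce simp: covered_by_def lt_rel_def)
    qed simp
    then show ?case
      using deg_covered[OF u(3)] by simp
  qed
qed

lemma modular_law:
  "\<lbrakk>x \<in> carrier G; y \<in> carrier G; z \<in> carrier G; x \<preceq> z\<rbrakk> \<Longrightarrow> x \<curlyvee> (y \<curlywedge> z) = (x \<curlyvee> y) \<curlywedge> z"
  using modular unfolding modular_lgroup_def by blast

context
  fixes x y assumes x: "x \<in> carrier G" and y: "y \<in> carrier G"
begin

lemma join_meet_cancel:
  assumes u: "u \<in> carrier G" and "x \<curlywedge> y \<preceq> u" "u \<preceq> x"
  shows "(u \<curlyvee> y) \<curlywedge> x = u"
proof -
  have "(u \<curlyvee> y) \<curlywedge> x = u \<curlyvee> (y \<curlywedge> x)"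
    using modular_law[OF u y x \<open>u \<preceq> x\<close>] by simp
  also have "\<dots> = u"
    using assms x y meet_commute join_commute join_absorb2 meet_closed by metis
  finally show ?thesis .
qed

lemma meet_join_cancel:
  assumes z: "z \<in> carrier G" and "y \<preceq> z" "z \<preceq> x \<curlyvee> y"
  shows "(z \<curlywedge> x) \<curlyvee> y = z"
proof -
  have "(z \<curlywedge> x) \<curlyvee> y = y \<curlyvee> (x \<curlywedge> z)"
    using x y z join_commute meet_commute meet_closed by metis
  also have "\<dots> = (y \<curlyvee> x) \<curlywedge> z"
    using modular_law[OF y x z \<open>y \<preceq> z\<close>] .
  also have "\<dots> = z"
    using assms x y join_commute meet_commute meet_absorb1 join_closed by metis
  finally show ?thesis .
qed

lemma covered_by_join:
  assumes "x \<curlywedge> y \<preceq> u" and cov: "covered_by G leq u c" and "c \<preceq> x"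
  shows "covered_by G leq (u \<curlyvee> y) (c \<curlyvee> y)"
proof -
  have u: "u \<in> carrier G" and c: "c \<in> carrier G" and "u \<preceq> c" "u \<noteq> c"
    and no_between: "\<not> (\<exists>z\<in>carrier G. u \<prec> z \<and> z \<prec> c)"
    using cov unfolding covered_by_def lt_rel_def by auto
  have "u \<preceq> x"
    using leq_trans[OF u c x \<open>u \<preceq> c\<close> \<open>c \<preceq> x\<close>] .
  have cy: "c \<curlyvee> y \<in> carrier G" and uy: "u \<curlyvee> y \<in> carrier G"
    using c u y by (simp_all add: join_closed)
  have "x \<curlywedge> y \<preceq> c"
    using leq_trans[OF meet_closed[OF x y] u c assms(1) \<open>u \<preceq> c\<close>] .
  have back_u: "(u \<curlyvee> y) \<curlywedge> x = u" and back_c: "(c \<curlyvee> y) \<curlywedge> x = c"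
    using join_meet_cancel[OF u assms(1) \<open>u \<preceq> x\<close>] join_meet_cancel[OF c \<open>x \<curlywedge> y \<preceq> c\<close> \<open>c \<preceq> x\<close>] .
  have "u \<curlyvee> y \<preceq> c \<curlyvee> y"
    using join_mono[OF u c y \<open>u \<preceq> c\<close>] .
  moreover have "u \<curlyvee> y \<noteq> c \<curlyvee> y"
    using back_u back_c \<open>u \<noteq> c\<close> by metis
  moreover have "\<not> (u \<curlyvee> y \<prec> z \<and> z \<prec> c \<curlyvee> y)" if z: "z \<in> carrier G" for z
  proof
    assume between: "u \<curlyvee> y \<prec> z \<and> z \<prec> c \<curlyvee> y"
    let ?z' = "z \<curlywedge> x"
    have z': "?z' \<in> carrier G"
      using z x by (rule meet_closed)
    have "u \<preceq> z" and "y \<preceq> z" and "z \<preceq> c \<curlyvee> y"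
      using between leq_trans[OF u uy z] leq_trans[OF y uy z] join_ge1[OF u y] join_ge2[OF u y]
      unfolding lt_rel_def by auto
    have "c \<curlyvee> y \<preceq> x \<curlyvee> y"
      using join_mono[OF c x y \<open>c \<preceq> x\<close>] .
    then have "?z' \<curlyvee> y = z"
      using meet_join_cancel[OF z \<open>y \<preceq> z\<close>] leq_trans[OF z cy join_closed[OF x y] \<open>z \<preceq> c \<curlyvee> y\<close>]
      by blast
    moreover have "u \<preceq> ?z'"
      using meet_greatest[OF z x u \<open>u \<preceq> z\<close> \<open>u \<preceq> x\<close>] .
    moreover have "?z' \<preceq> c"
      using meet_greatest[OF cy x z'] leq_trans[OF z' z cy meet_le1[OF z x] \<open>z \<preceq> c \<curlyvee> y\<close>]
        meet_le2[OF z x] back_c by metis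
    ultimately show False
      using no_between z' between unfolding lt_rel_def by metis
  qed
  ultimately show ?thesis
    unfolding covered_by_def lt_rel_def using uy cy by blast
qed

lemma deg_join_meet: "deg (x \<curlyvee> y) + deg (x \<curlywedge> y) = deg x + deg y"
proof -
  let ?m = "x \<curlywedge> y"
  have m: "?m \<in> carrier G"
    using x y by (rule meet_closed)
  have "deg (c \<curlyvee> y) + deg ?m = deg c + deg y"
    if "c \<in> {z \<in> carrier G. ?m \<preceq> z}" and "c \<preceq> x" for c
    using that
  proof (induction c rule: wfp_on_induct[OF wfp_on_above[OF m], consumes 1, case_names less])
    case (less c)
    then have c: "c \<in> carrier G" and "?m \<preceq> c" "c \<preceq> x" by auto
    show ?case
    proof (cases "c = ?m")
      case True
      then show ?thesis
        using join_absorb2[OF c y] meet_le2[OF x y] by simp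
    next
      case False
      then obtain u where u: "u \<in> carrier G" "?m \<preceq> u" and cov: "covered_by G leq u c"
        using exists_covered_between[OF m c] \<open>?m \<preceq> c\<close> unfolding lt_rel_def by metis
      have "u \<prec> c" and "u \<preceq> x"
        using cov leq_trans[OF u(1) c x] \<open>c \<preceq> x\<close> unfolding covered_by_def lt_rel_def by auto
      then have "deg (u \<curlyvee> y) + deg ?m = deg u + deg y"
        using less.IH[of u] u by simp
      moreover have "deg u = deg c + 1"
        using deg_covered[OF cov] .
      moreover have "deg (u \<curlyvee> y) = deg (c \<curlyvee> y) + 1"
        using deg_covered[OF covered_by_join[OF u(2) cov \<open>c \<preceq> x\<close>]] .
      ultimately show ?thesis by simp
    qed
  qed
  then show ?thesis
    using x meet_le1[OF x y] leq_refl[OF x] by simp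
qed

end

context
  fixes s assumes unit: "strong_order_unit G leq s"
begin

lemma join_complement_eq_one:
  assumes a: "a \<in> interval G leq (inv s) \<one>" and b: "b \<in> interval G leq (inv s) \<one>"
    and right_normal: "right_normal_pair G leq s b a"
  shows "(inv s \<otimes> inv a) \<curlyvee> b = \<one>"
proof (rule ccontr)
  let ?x = "inv s \<otimes> inv a"
  let ?J = "?x \<curlyvee> b"
  assume "?J \<noteq> \<one>"
  have s: "s \<in> carrier G" and a': "a \<in> carrier G" "inv s \<preceq> a" "a \<preceq> \<one>"
    and b': "b \<in> carrier G" "b \<preceq> \<one>"
    using a b unit_closed[OF unit] unfolding interval_def by auto
  have x: "?x \<in> carrier G" and xa: "?x \<otimes> a = inv s"
    using s a' by (simp_all add: m_assoc)
  have "?x \<preceq> \<one>"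
    using mult_right_le_iff[OF x one_closed a'(1)] xa a' by simp
  then have J: "?J \<in> carrier G" "?J \<preceq> \<one>"
    using join_closed[OF x b'(1)] join_least[OF x b'(1) one_closed] b' by auto
  have "b \<otimes> inv ?J \<in> neg_cone G leq"
    using mult_right_le_iff[of b ?J "inv ?J"] join_ge2[OF x b'(1)] J b'
    unfolding neg_cone_def by (simp add: m_assoc)
  moreover have "?J \<in> neg_cone G leq"
    using J unfolding neg_cone_def by simp
  moreover have "b \<otimes> inv ?J \<otimes> ?J = b"
    using J b' by (simp add: m_assoc)
  moreover have "inv s \<preceq> ?J \<otimes> a" and "?J \<otimes> a \<preceq> \<one>"
    using mult_right_mono[OF x J(1) a'(1) join_ge1[OF x b'(1)]] xa
      mult_right_mono[OF J(1) one_closed a'(1) J(2)] leq_trans[OF _ a'(1) one_closed _ a'(3)] J a'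
    by auto
  ultimately show False
    using right_normal \<open>?J \<noteq> \<one>\<close> J a' unfolding right_normal_pair_def interval_def by blast
qed

lemma meet_complement_eq_inv_unit:
  assumes a: "a \<in> interval G leq (inv s) \<one>" and b: "b \<in> interval G leq (inv s) \<one>"
    and "deg a = deg b" and right_normal: "right_normal_pair G leq s b a"
  shows "(inv s \<otimes> inv a) \<curlywedge> b = inv s"
proof (rule ccontr)
  let ?x = "inv s \<otimes> inv a"
  assume ne: "?x \<curlywedge> b \<noteq> inv s"
  have s: "s \<in> carrier G" and a': "a \<in> carrier G" "a \<preceq> \<one>" and b': "b \<in> carrier G" "inv s \<preceq> b"
    using a b unit_closed[OF unit] unfolding interval_def by auto
  have x: "?x \<in> carrier G"
    using s a' by simp
  have "inv s \<preceq> ?x \<curlywedge> b"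
    using meet_greatest[OF x b'(1)] inv_unit_le_mult_inv[OF unit a'] b' s by simp
  with ne have "deg (?x \<curlywedge> b) < deg (inv s)"
    using deg_less_if_less meet_closed[OF x b'(1)] s unfolding lt_rel_def by simp
  moreover have "deg (?x \<curlywedge> b) = deg (inv s)"
    using deg_join_meet[OF x b'(1)] join_complement_eq_one[OF a b right_normal]
      deg_mult[of "inv s" "inv a"] deg_inv[OF a'(1)] deg_one \<open>deg a = deg b\<close> s a' by simp
  ultimately show False by simp
qed

lemma left_normal_pair_if_right_normal_pair:
  assumes a: "a \<in> interval G leq (inv s) \<one>" and b: "b \<in> interval G leq (inv s) \<one>"
    and "deg a = deg b" and right_normal: "right_normal_pair G leq s b a"
  shows "left_normal_pair G leq s b a"
  unfolding left_normal_pair_def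
proof (clarify)
  fix h h'
  assume h: "h \<in> neg_cone G leq" and h': "h' \<in> neg_cone G leq" and "h \<noteq> \<one>"
    and a_eq: "a = h \<otimes> h'" and bh: "b \<otimes> h \<in> interval G leq (inv s) \<one>"
  have s: "s \<in> carrier G" and b': "b \<in> carrier G"
    using b unit_closed[OF unit] unfolding interval_def by auto
  have hc: "h \<in> carrier G" "h \<preceq> \<one>" and h'c: "h' \<in> carrier G" "h' \<preceq> \<one>"
    using h h' unfolding neg_cone_def by auto
  let ?w = "inv s \<otimes> inv h"
  have w: "?w \<in> carrier G"
    using s hc by simp
  have "?w \<preceq> b"
    using mult_right_mono[of "inv s" "b \<otimes> h" "inv h"] bh s b' hc
    unfolding interval_def by (simp add: m_assoc)
  moreover have "?w \<preceq> inv s \<otimes> inv a"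
    using mult_right_mono[OF _ _ _ inv_unit_le_mult_inv[OF unit h'c], of "inv h"] a_eq s hc h'c
    by (simp add: m_assoc inv_mult_group)
  ultimately have "?w \<preceq> (inv s \<otimes> inv a) \<curlywedge> b"
    using meet_greatest[OF _ b' w] a_eq s hc h'c by simp
  then have "?w \<preceq> inv s"
    using meet_complement_eq_inv_unit[OF a b \<open>deg a = deg b\<close> right_normal] by simp
  then have "inv s \<otimes> \<one> \<preceq> inv s \<otimes> h"
    using mult_right_mono[OF w _ hc(1), of "inv s"] s hc by (simp add: m_assoc)
  then have "\<one> \<preceq> h"
    using inv_unit_mult_le_iff[OF unit one_closed hc(1)] by simp
  then show False
    using leq_antisym[OF hc(1) one_closed hc(2)] \<open>h \<noteq> \<one>\<close> by simp
qed

end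

end

theorem mainTheorem7:
  fixes G :: "('a, 'b) monoid_scheme" and leq :: "'a \<Rightarrow> 'a \<Rightarrow> bool"
    and s g :: 'a and deg :: "'a \<Rightarrow> int" and d :: int and gs :: "'a list"
  assumes "right_lgroup G leq" and "modular_lgroup G leq" and "noetherian_lgroup G leq"
    and "strong_order_unit G leq s" and "is_degree G leq deg"
    and "d \<ge> 1" and "g \<in> neg_cone G leq"
    and "homogeneous G leq s deg d g"
    and "right_normal G leq s g gs"
  shows "left_normal G leq s g (rev gs)"
proof -
  interpret modular_noetherian_rlgroup G leq deg
    using assms(1-3,5) by unfold_locales (simp_all add: rlgroup_def)
  have factors: "\<forall>x\<in>set gs. x \<in> interval G leq (inv\<^bsub>G\<^esub> s) \<one>\<^bsub>G\<^esub> - {\<one>\<^bsub>G\<^esub>}"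
    and g: "g = lprod G (rev gs)"
    and right_normal: "successively (\<lambda>a b. right_normal_pair G leq s b a) gs"
    using assms(9) unfolding right_normal_iff_successively by blast+
  have "\<forall>x\<in>set gs. deg x = d"
    using assms(8,9) unfolding homogeneous_def by blast
  then have "successively (\<lambda>a b. left_normal_pair G leq s b a) gs"
    using right_normal factors left_normal_pair_if_right_normal_pair[OF assms(4)]
    by (elim successively_mono) auto
  then show ?thesis
    unfolding left_normal_iff_successively using factors g by simp
qed

end
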